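(* There is an absolute constant $C>0$ such that the following holds. Fix $d,k\in\mathbb N$. Let $A=gg^\top$ where $g\in\mathbb R^{d^k}$ has iid standard normal entries, and let $x=x_1\otimes\cdots\otimes x_k$ with $x_1,\dots,x_k\in\mathbb R^d$ independent of each other and of $g$, each being a Rademacher vector or a $\mathcal N(0,I_d)$ vector. Then (i) with probability at least $3/4$ over $g$, $\operatorname{Var}[x^\top Ax\mid g]\le C(2+\tfrac1d)^k(\operatorname{tr}(A))^2$; and (ii) for every $\varepsilon\in(0,1)$ and every $\ell\ge C\,\varepsilon^{-2}(2+\tfrac1d)^k$, with probability at least $2/3$ (over $g$ and the query vectors), the Kronecker–Hutchinson estimator satisfies $(1-\varepsilon)\operatorname{tr}(A)\le H_\ell(A)\le(1+\varepsilon)\operatorname{tr}(A)$.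
   Context: A Rademacher vector has iid entries uniform on $\{\pm1\}$. The Kronecker–Hutchinson estimator with $\ell$ samples is $H_\ell(A)=\frac1\ell\sum_{j=1}^\ell (x^{(j)})^\top A x^{(j)}$, where $x^{(1)},\dots,x^{(\ell)}$ are iid copies of $x=x_1\otimes\cdots\otimes x_k$ (independent of $g$). *)

theory Defs
  imports "HOL-Probability.Probability"
begin

definition rademacher :: "real measure" where
  "rademacher = distr (measure_pmf (pmf_of_set {-1, 1::real})) borel (\<lambda>t. t)"

definition std_gaussian :: "real measure" where
  "std_gaussian = density lborel std_normal_density"

definition entry_dist :: "bool \<Rightarrow> real measure" where
  "entry_dist r = (if r then rademacher else std_gaussian)"

text \<open>The k independent factor vectors x_1..x_k in R^d, as X j i (j<k, i<d).\<close>
definition query_dist :: "nat \<Rightarrow> nat \<Rightarrow> (nat \<Rightarrow> bool) \<Rightarrow> (nat \<Rightarrow> nat \<Rightarrow> real) measure" where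
  "query_dist d k rad = PiM {..<k} (\<lambda>j. PiM {..<d} (\<lambda>_. entry_dist (rad j)))"

text \<open>Index set of R^(d^k): multi-indices (i_1,...,i_k) with i_j < d.\<close>
definition kron_index :: "nat \<Rightarrow> nat \<Rightarrow> (nat \<Rightarrow> nat) set" where
  "kron_index d k = {..<k} \<rightarrow>\<^sub>E {..<d}"

definition gauss_vec :: "nat \<Rightarrow> nat \<Rightarrow> ((nat \<Rightarrow> nat) \<Rightarrow> real) measure" where
  "gauss_vec d k = PiM (kron_index d k) (\<lambda>_. std_gaussian)"

definition kron_vec :: "nat \<Rightarrow> (nat \<Rightarrow> nat \<Rightarrow> real) \<Rightarrow> (nat \<Rightarrow> nat) \<Rightarrow> real" where
  "kron_vec k X i = (\<Prod>j<k. X j (i j))"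

definition matA :: "((nat \<Rightarrow> nat) \<Rightarrow> real) \<Rightarrow> (nat \<Rightarrow> nat) \<Rightarrow> (nat \<Rightarrow> nat) \<Rightarrow> real" where
  "matA g i i' = g i * g i'"

definition traceA :: "nat \<Rightarrow> nat \<Rightarrow> ((nat \<Rightarrow> nat) \<Rightarrow> real) \<Rightarrow> real" where
  "traceA d k g = (\<Sum>i\<in>kron_index d k. matA g i i)"

definition quad_form :: "nat \<Rightarrow> nat \<Rightarrow> ((nat \<Rightarrow> nat) \<Rightarrow> real) \<Rightarrow> (nat \<Rightarrow> nat \<Rightarrow> real) \<Rightarrow> real" where
  "quad_form d k g X =
     (\<Sum>i\<in>kron_index d k. \<Sum>i'\<in>kron_index d k. kron_vec k X i * matA g i i' * kron_vec k X i')"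

definition var_of :: "'a measure \<Rightarrow> ('a \<Rightarrow> real) \<Rightarrow> real" where
  "var_of M f = (\<integral>x. (f x - (\<integral>y. f y \<partial>M))\<^sup>2 \<partial>M)"

definition hutch :: "nat \<Rightarrow> nat \<Rightarrow> nat \<Rightarrow> ((nat \<Rightarrow> nat) \<Rightarrow> real) \<Rightarrow> (nat \<Rightarrow> nat \<Rightarrow> nat \<Rightarrow> real) \<Rightarrow> real" where
  "hutch d k l g Xs = (1 / real l) * (\<Sum>s<l. quad_form d k g (Xs s))"

end

theory Submission
  imports Defs
begin

(* Conditionally on g, the quadratic form q(x) = (g . x)^2 has mean |g|^2 = tr A, because the
   entries of x are independent with mean 0 and variance 1. Averaged over g, its second moment is
   3 E |x|^4, since g . x is Gaussian with variance |x|^2; and |x|^2 factors over the k Kronecker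
   factors, giving at most 3 (d^2 + 2d)^k. By Markov's inequality, outside an event of probability
   1/12 the conditional second moment is at most 36 (d^2 + 2d)^k, and by a Chernoff bound
   |g|^2 >= c d^k outside another event of probability 1/12. On the remaining event
   Var[q | g] <= 36 (d^2 + 2d)^k <= (36 / c^2) (1 + 2/d)^k (tr A)^2, which gives (i) since
   1 + 2/d <= 2 + 1/d. For (ii), Chebyshev's inequality for the mean of l independent samples
   bounds the failure probability by 1/6 for every such g, and Fubini adds the 1/6 of bad g. *)

section \<open>The entry distributions\<close>

lemma space_rademacher [simp]: "space rademacher = UNIV"
  and sets_rademacher [simp, measurable_cong]: "sets rademacher = sets borel"
  by (simp_all add: rademacher_def)

lemma space_std_gaussian [simp]: "space std_gaussian = UNIV"
  and sets_std_gaussian [simp, measurable_cong]: "sets std_gaussian = sets borel"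
  by (simp_all add: std_gaussian_def)

lemma space_entry_dist [simp]: "space (entry_dist r) = UNIV"
  and sets_entry_dist [simp, measurable_cong]: "sets (entry_dist r) = sets borel"
  by (simp_all add: entry_dist_def)

lemma prob_space_rademacher: "prob_space rademacher"
  unfolding rademacher_def
  by (rule prob_space.prob_space_distr) (auto simp: measure_pmf.prob_space_axioms)

lemma prob_space_std_gaussian: "prob_space std_gaussian"
  unfolding std_gaussian_def using real_dist_normal_dist by (simp add: real_distribution_def)

lemma prob_space_entry_dist: "prob_space (entry_dist r)"
  by (simp add: entry_dist_def prob_space_rademacher prob_space_std_gaussian)

lemma integral_rademacher: "(\<integral>x. f x \<partial>rademacher) = (f (-1) + f 1) / 2"
  and integrable_rademacher: "integrable rademacher f"
  if [measurable]: "f \<in> borel_measurable borel" for f :: "real \<Rightarrow> real"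
proof -
  show "(\<integral>x. f x \<partial>rademacher) = (f (-1) + f 1) / 2"
    unfolding rademacher_def by (simp add: integral_distr integral_pmf_of_set)
  show "integrable rademacher f"
    unfolding rademacher_def
    by (subst integrable_distr_eq) (auto intro!: integrable_measure_pmf_finite)
qed

lemma nn_integral_std_gaussian:
  "f \<in> borel_measurable borel \<Longrightarrow>
     (\<integral>\<^sup>+x. f x \<partial>std_gaussian) = (\<integral>\<^sup>+x. ennreal (std_normal_density x) * f x \<partial>lborel)"
  unfolding std_gaussian_def by (subst nn_integral_density) auto

lemma integrable_std_gaussian_power: "integrable std_gaussian (\<lambda>x. x ^ n)"
  unfolding std_gaussian_def
  by (subst integrable_density) (auto simp: integrable_std_normal_moment)

lemma integral_std_gaussian_power:
  "(\<integral>x. x ^ n \<partial>std_gaussian) = (\<integral>x. std_normal_density x * x ^ n \<partial>lborel)"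
  unfolding std_gaussian_def by (subst integral_density) auto

lemma integrable_entry_dist_power: "integrable (entry_dist r) (\<lambda>x. x ^ n)"
  by (auto simp: entry_dist_def integrable_rademacher integrable_std_gaussian_power)

lemma integral_entry_dist_mean: "(\<integral>x. x \<partial>entry_dist r) = 0"
  using integral_std_gaussian_power[of 1] integral_std_normal_moment_odd[of 0]
  by (auto simp: entry_dist_def integral_rademacher)

lemma integral_entry_dist_square: "(\<integral>x. x\<^sup>2 \<partial>entry_dist r) = 1"
  using integral_std_gaussian_power[of 2] integral_std_normal_moment_even[of 1]
  by (auto simp: entry_dist_def integral_rademacher)

lemma integral_entry_dist_fourth_le: "(\<integral>x. x ^ 4 \<partial>entry_dist r) \<le> 3"
proof -
  have "fact 4 / (2\<^sup>2 * fact 2) = (3::real)"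
    by (simp add: fact_numeral)
  then show ?thesis
    using integral_std_gaussian_power[of 4] integral_std_normal_moment_even[of 2]
    by (auto simp: entry_dist_def integral_rademacher)
qed

lemma nn_integral_entry_dist_even_power:
  "(\<integral>\<^sup>+x. ennreal (x ^ (2 * n)) \<partial>entry_dist r) = ennreal (\<integral>x. x ^ (2 * n) \<partial>entry_dist r)"
  by (rule nn_integral_eq_integral[OF integrable_entry_dist_power]) (simp add: power_mult)

lemma nn_integral_entry_dist_square: "(\<integral>\<^sup>+x. ennreal (x\<^sup>2) \<partial>entry_dist r) = 1"
  using nn_integral_entry_dist_even_power[of r 1] integral_entry_dist_square[of r] by simp

lemma nn_integral_entry_dist_fourth_le: "(\<integral>\<^sup>+x. ennreal (x ^ 4) \<partial>entry_dist r) \<le> 3"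
  using nn_integral_entry_dist_even_power[of r 2] ennreal_leI[OF integral_entry_dist_fourth_le[of r]]
  by simp

section \<open>Vectors with independent coordinates\<close>

lemma (in product_prob_space) nn_integral_PiM_coord_pair:
  fixes f :: "'i \<Rightarrow> 'a \<Rightarrow> ennreal"
  assumes "finite I" "a \<in> I" "b \<in> I" and [measurable]: "\<And>i. i \<in> I \<Longrightarrow> f i \<in> borel_measurable (M i)"
  shows "(\<integral>\<^sup>+x. f a (x a) * f b (x b) \<partial>Pi\<^sub>M I M) =
    (if a = b then \<integral>\<^sup>+y. f a y * f a y \<partial>M a else (\<integral>\<^sup>+y. f a y \<partial>M a) * (\<integral>\<^sup>+y. f b y \<partial>M b))"
proof -
  define h where "h i y = (if i = a then f a y else 1) * (if i = b then f b y else 1)" for i y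
  have prod_h: "(\<lambda>x. f a (x a) * f b (x b)) = (\<lambda>x. \<Prod>i\<in>I. h i (x i))"
    using assms by (simp add: fun_eq_iff h_def prod.distrib prod.delta)
  have "(\<integral>\<^sup>+x. f a (x a) * f b (x b) \<partial>Pi\<^sub>M I M) = (\<Prod>i\<in>I. \<integral>\<^sup>+y. h i y \<partial>M i)"
  proof (unfold prod_h, intro product_nn_integral_prod)
    show "h i \<in> borel_measurable (M i)" if "i \<in> I" for i
      using that assms(2,3) by (cases "i = a"; cases "i = b") (simp_all add: h_def[abs_def])
  qed fact
  also have "\<dots> = (\<Prod>i\<in>I. (if i = a then if a = b then \<integral>\<^sup>+y. f a y * f a y \<partial>M a else \<integral>\<^sup>+y. f a y \<partial>M a else 1)
      * (if i = b \<and> a \<noteq> b then \<integral>\<^sup>+y. f b y \<partial>M b else 1))"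
    by (intro prod.cong refl) (auto simp: h_def M.emeasure_space_1)
  finally show ?thesis
    using assms by (simp add: prod.distrib prod.delta)
qed

lemma (in product_prob_space) integral_PiM_coord_pair:
  fixes f :: "'i \<Rightarrow> 'a \<Rightarrow> real"
  assumes "finite I" "a \<in> I" "b \<in> I"
    and "\<And>i. i \<in> I \<Longrightarrow> integrable (M i) (f i)" "\<And>i. i \<in> I \<Longrightarrow> integrable (M i) (\<lambda>y. f i y * f i y)"
  shows "integrable (Pi\<^sub>M I M) (\<lambda>x. f a (x a) * f b (x b))"
    and "(\<integral>x. f a (x a) * f b (x b) \<partial>Pi\<^sub>M I M) =
      (if a = b then \<integral>y. f a y * f a y \<partial>M a else (\<integral>y. f a y \<partial>M a) * (\<integral>y. f b y \<partial>M b))"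
proof -
  define h where "h i y = (if i = a then f a y else 1) * (if i = b then f b y else 1)" for i y
  have prod_h: "(\<lambda>x. f a (x a) * f b (x b)) = (\<lambda>x. \<Prod>i\<in>I. h i (x i))"
    using assms by (simp add: fun_eq_iff h_def prod.distrib prod.delta)
  have int_h: "integrable (M i) (\<lambda>y. h i y)" if "i \<in> I" for i
    using assms that by (cases "i = a"; cases "i = b") (auto simp: h_def)
  show "integrable (Pi\<^sub>M I M) (\<lambda>x. f a (x a) * f b (x b))"
    unfolding prod_h using assms(1) int_h by (rule product_integrable_prod)
  have "(\<integral>x. f a (x a) * f b (x b) \<partial>Pi\<^sub>M I M) = (\<Prod>i\<in>I. \<integral>y. h i y \<partial>M i)"
    unfolding prod_h using assms(1) int_h by (rule product_integral_prod)
  also have "\<dots> = (\<Prod>i\<in>I. (if i = a then if a = b then \<integral>y. f a y * f a y \<partial>M a else \<integral>y. f a y \<partial>M a else 1)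
      * (if i = b \<and> a \<noteq> b then \<integral>y. f b y \<partial>M b else 1))"
    by (intro prod.cong refl) (auto simp: h_def M.prob_space)
  finally show "(\<integral>x. f a (x a) * f b (x b) \<partial>Pi\<^sub>M I M) =
      (if a = b then \<integral>y. f a y * f a y \<partial>M a else (\<integral>y. f a y \<partial>M a) * (\<integral>y. f b y \<partial>M b))"
    using assms by (simp add: prod.distrib prod.delta)
qed

lemma integral_PiM_coord_mult:
  fixes M :: "real measure"
  assumes "prob_space M" "integrable M (\<lambda>x. x)" "integrable M (\<lambda>x. x\<^sup>2)"
    and "(\<integral>x. x \<partial>M) = 0" "(\<integral>x. x\<^sup>2 \<partial>M) = 1" and "finite I" "a \<in> I" "b \<in> I"
  shows "integrable (\<Pi>\<^sub>M i\<in>I. M) (\<lambda>v. v a * v b)"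
    and "(\<integral>v. v a * v b \<partial>\<Pi>\<^sub>M i\<in>I. M) = (if a = b then 1 else 0)"
proof -
  interpret product_prob_space "\<lambda>_. M" I by (intro product_prob_spaceI assms(1))
  have "integrable M (\<lambda>y. y * y)" "(\<integral>y. y * y \<partial>M) = 1"
    using assms(3,5) by (simp_all add: power2_eq_square)
  then show "integrable (\<Pi>\<^sub>M i\<in>I. M) (\<lambda>v. v a * v b)"
    and "(\<integral>v. v a * v b \<partial>\<Pi>\<^sub>M i\<in>I. M) = (if a = b then 1 else 0)"
    using integral_PiM_coord_pair[of a b "\<lambda>_ y. y"] assms by simp_all
qed

lemma nn_integral_PiM_sum_squares_square_le:
  fixes M :: "real measure"
  assumes "prob_space M" "sets M = sets borel"
    and "(\<integral>\<^sup>+x. ennreal (x\<^sup>2) \<partial>M) = 1" "(\<integral>\<^sup>+x. ennreal (x ^ 4) \<partial>M) \<le> 3" and "finite I"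
  shows "(\<integral>\<^sup>+v. ennreal ((\<Sum>a\<in>I. (v a)\<^sup>2)\<^sup>2) \<partial>\<Pi>\<^sub>M i\<in>I. M)
    \<le> ennreal ((real (card I))\<^sup>2 + 2 * real (card I))"
proof -
  interpret product_prob_space "\<lambda>_. M" I by (intro product_prob_spaceI assms(1))
  have coord: "(\<lambda>v. v a) \<in> borel_measurable (\<Pi>\<^sub>M i\<in>I. M)" if "a \<in> I" for a
    using measurable_component_singleton[OF that, of "\<lambda>_. M"] unfolding measurable_cong_sets[OF refl assms(2)] .
  have pair: "(\<integral>\<^sup>+v. ennreal ((v a)\<^sup>2) * ennreal ((v b)\<^sup>2) \<partial>\<Pi>\<^sub>M i\<in>I. M) \<le> ennreal (if a = b then 3 else 1)"
    if "a \<in> I" "b \<in> I" for a b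
  proof -
    have "ennreal (y\<^sup>2) * ennreal (y\<^sup>2) = ennreal (y ^ 4)" for y :: real
      by (simp flip: ennreal_mult add: power_add[symmetric])
    moreover have "(\<lambda>y. ennreal (y\<^sup>2)) \<in> borel_measurable M"
      by (simp add: measurable_cong_sets[OF assms(2) refl])
    ultimately show ?thesis
      using nn_integral_PiM_coord_pair[of a b "\<lambda>_ y. ennreal (y\<^sup>2)"] assms that by simp
  qed
  have "ennreal ((\<Sum>a\<in>I. (v a)\<^sup>2)\<^sup>2) = (\<Sum>a\<in>I. \<Sum>b\<in>I. ennreal ((v a)\<^sup>2) * ennreal ((v b)\<^sup>2))" for v :: "'a \<Rightarrow> real"
    by (simp add: power2_eq_square[of "sum _ _"] sum_product sum_nonneg flip: ennreal_mult sum_ennreal)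
  then have "(\<integral>\<^sup>+v. ennreal ((\<Sum>a\<in>I. (v a)\<^sup>2)\<^sup>2) \<partial>\<Pi>\<^sub>M i\<in>I. M)
      = (\<Sum>a\<in>I. \<Sum>b\<in>I. \<integral>\<^sup>+v. ennreal ((v a)\<^sup>2) * ennreal ((v b)\<^sup>2) \<partial>\<Pi>\<^sub>M i\<in>I. M)"
    using coord by (simp add: nn_integral_sum)
  also have "\<dots> \<le> (\<Sum>a\<in>I. \<Sum>b\<in>I. ennreal (if a = b then 3 else 1))"
    by (intro sum_mono pair)
  also have "\<dots> = ennreal (\<Sum>a\<in>I. \<Sum>b\<in>I. if a = b then 3 else 1)"
    by (simp add: sum_nonneg)
  also have "(\<Sum>a\<in>I. \<Sum>b\<in>I. if a = b then 3 else 1) = (real (card I))\<^sup>2 + 2 * real (card I)"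
  proof -
    have "(if a = b then 3 else 1::real) = 1 + (if a = b then 2 else 0)" for a b :: 'a
      by simp
    then show ?thesis
      using assms(5) by (simp add: sum.distrib power2_eq_square algebra_simps)
  qed
  finally show ?thesis .
qed

section \<open>Standard Gaussian vectors\<close>

lemma measurable_PiM_std_gaussian_coord:
  "i \<in> I \<Longrightarrow> (\<lambda>g. g i) \<in> borel_measurable (\<Pi>\<^sub>M i\<in>I. std_gaussian)"
  using measurable_component_singleton[of i I "\<lambda>_. std_gaussian"]
  unfolding measurable_cong_sets[OF refl sets_std_gaussian] .

lemma distr_PiM_std_gaussian_coord:
  assumes "i \<in> I"
  shows "distr (\<Pi>\<^sub>M i\<in>I. std_gaussian) borel (\<lambda>g. g i) = std_gaussian"
proof -
  have "distr (\<Pi>\<^sub>M i\<in>I. std_gaussian) borel (\<lambda>g. g i) = distr (\<Pi>\<^sub>M i\<in>I. std_gaussian) std_gaussian (\<lambda>g. g i)"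
    by (rule distr_cong) auto
  then show ?thesis
    using distr_PiM_component[OF prob_space_std_gaussian assms] by simp
qed

lemma indep_vars_PiM_std_gaussian:
  assumes "I \<noteq> {}"
  shows "prob_space.indep_vars (\<Pi>\<^sub>M i\<in>I. std_gaussian) (\<lambda>_. borel) (\<lambda>i g. g i) I"
proof -
  interpret prob_space "\<Pi>\<^sub>M i\<in>I. std_gaussian"
    by (intro prob_space_PiM prob_space_std_gaussian)
  have "distr (\<Pi>\<^sub>M i\<in>I. std_gaussian) (\<Pi>\<^sub>M i\<in>I. borel) (\<lambda>x. restrict (\<lambda>i. x i) I)
      = distr (\<Pi>\<^sub>M i\<in>I. std_gaussian) (\<Pi>\<^sub>M i\<in>I. std_gaussian) (\<lambda>x. x)"
    by (rule distr_cong) (auto simp: space_PiM intro!: sets_PiM_cong)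
  also have "\<dots> = (\<Pi>\<^sub>M i\<in>I. distr (\<Pi>\<^sub>M i\<in>I. std_gaussian) borel (\<lambda>g. g i))"
    by (simp add: distr_PiM_std_gaussian_coord cong: PiM_cong)
  finally show ?thesis
    using assms measurable_PiM_std_gaussian_coord by (subst indep_vars_iff_distr_eq_PiM') auto
qed

lemma distributed_PiM_std_gaussian_coord:
  assumes "i \<in> I"
  shows "distributed (\<Pi>\<^sub>M i\<in>I. std_gaussian) lborel (\<lambda>g. g i) std_normal_density"
proof -
  have "distr (\<Pi>\<^sub>M i\<in>I. std_gaussian) lborel (\<lambda>g. g i) = distr (\<Pi>\<^sub>M i\<in>I. std_gaussian) borel (\<lambda>g. g i)"
    by (rule distr_cong) auto
  then have "distr (\<Pi>\<^sub>M i\<in>I. std_gaussian) lborel (\<lambda>g. g i) = density lborel std_normal_density"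
    using distr_PiM_std_gaussian_coord[OF assms] by (simp add: std_gaussian_def)
  moreover have "(\<lambda>g. g i) \<in> measurable (\<Pi>\<^sub>M i\<in>I. std_gaussian) lborel"
    using measurable_PiM_std_gaussian_coord[OF assms] unfolding measurable_lborel1 .
  ultimately show ?thesis
    unfolding distributed_def by simp
qed

lemma nn_integral_PiM_std_gaussian_linear_fourth:
  assumes "finite I"
  shows "(\<integral>\<^sup>+g. ennreal ((\<Sum>i\<in>I. c i * g i) ^ 4) \<partial>\<Pi>\<^sub>M i\<in>I. std_gaussian)
    = ennreal (3 * (\<Sum>i\<in>I. (c i)\<^sup>2)\<^sup>2)"
proof -
  interpret P: prob_space "\<Pi>\<^sub>M i\<in>I. std_gaussian"
    by (intro prob_space_PiM prob_space_std_gaussian)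
  \<comment> \<open>the sum of independent normals needs positive variances, so drop the zero coefficients\<close>
  define J where "J = {i\<in>I. c i \<noteq> 0}"
  have J: "J \<subseteq> I" "finite J"
    using assms by (auto simp: J_def)
  have restrict_J: "(\<Sum>i\<in>I. c i * g i) = (\<Sum>i\<in>J. c i * g i)" "(\<Sum>i\<in>I. (c i)\<^sup>2) = (\<Sum>i\<in>J. (c i)\<^sup>2)" for g
    unfolding J_def using assms by (auto intro: sum.mono_neutral_right)
  show ?thesis
  proof (cases "J = {}")
    case True
    then show ?thesis
      unfolding restrict_J by simp
  next
    case False
    define s where "s = (\<Sum>i\<in>J. (c i)\<^sup>2)"
    have "0 < s"
      unfolding s_def using False J by (intro sum_pos) (auto simp: J_def)
    have indep: "P.indep_vars (\<lambda>_. borel) (\<lambda>i g. c i * g i) J"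
      using False J P.indep_vars_compose2[OF P.indep_vars_subset[OF indep_vars_PiM_std_gaussian J(1)],
          of "\<lambda>i x. c i * x" "\<lambda>_. borel"]
      by auto
    have pos: "0 < \<bar>c i\<bar>" if "i \<in> J" for i
      using that by (simp add: J_def)
    have dist: "distributed (\<Pi>\<^sub>M i\<in>I. std_gaussian) lborel (\<lambda>g. c i * g i) (normal_density 0 \<bar>c i\<bar>)"
      if "i \<in> J" for i
      using that J P.normal_density_affine[OF distributed_PiM_std_gaussian_coord[of i I], of "c i" 0]
      by (auto simp: J_def)
    then have "distributed (\<Pi>\<^sub>M i\<in>I. std_gaussian) lborel (\<lambda>g. \<Sum>i\<in>J. c i * g i) (normal_density 0 (sqrt s))"
      using P.sum_indep_normal[OF J(2) False indep pos dist] by (simp add: s_def)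
    then have "(\<integral>\<^sup>+g. ennreal ((\<Sum>i\<in>J. c i * g i) ^ 4) \<partial>\<Pi>\<^sub>M i\<in>I. std_gaussian)
        = (\<integral>\<^sup>+y. ennreal (normal_density 0 (sqrt s) y * y ^ (2 * 2)) \<partial>lborel)"
      by (subst distributed_nn_integral[symmetric]) (auto simp: ennreal_mult intro!: nn_integral_cong)
    also have "\<dots> = ennreal (fact (2 * 2) / ((2 / (sqrt s)\<^sup>2)\<^sup>2 * fact 2))"
      using integrable_normal_moment[of "sqrt s" 0 "2 * 2"] integral_normal_moment_even[of "sqrt s" 0 2] \<open>0 < s\<close>
      by (subst nn_integral_eq_integral) (auto simp: power_mult)
    also have "fact (2 * 2) / ((2 / (sqrt s)\<^sup>2)\<^sup>2 * fact 2) = 3 * s\<^sup>2"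
      using \<open>0 < s\<close> by (simp add: fact_numeral field_simps power2_eq_square)
    finally show ?thesis
      unfolding restrict_J s_def .
  qed
qed

lemma std_normal_density_le_1: "std_normal_density x \<le> 1"
proof -
  have "1 \<le> sqrt (2 * pi)"
    using pi_gt3 by simp
  then show ?thesis
    unfolding std_normal_density_def
    using mult_mono[of "1 / sqrt (2 * pi)" 1 "exp (- x\<^sup>2 / 2)" 1] by simp
qed

lemma nn_integral_std_gaussian_exp_neg_square_le:
  assumes "0 \<le> t" "0 < a"
  shows "(\<integral>\<^sup>+x. ennreal (exp (- t * x\<^sup>2)) \<partial>std_gaussian) \<le> ennreal (2 * a + exp (- t * a\<^sup>2))"
proof -
  have pointwise: "ennreal (std_normal_density x) * ennreal (exp (- t * x\<^sup>2))
      \<le> indicator {-a..a} x + ennreal (exp (- t * a\<^sup>2)) * ennreal (std_normal_density x)" for x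
  proof (cases "\<bar>x\<bar> \<le> a")
    case True
    have "std_normal_density x * exp (- t * x\<^sup>2) \<le> 1 * 1"
      using std_normal_density_le_1[of x] assms by (intro mult_mono) auto
    then have "ennreal (std_normal_density x) * ennreal (exp (- t * x\<^sup>2)) \<le> 1"
      by (simp add: ennreal_mult[symmetric] ennreal_le_1)
    then show ?thesis
      using True by (simp add: indicator_def abs_le_iff add_increasing2)
  next
    case False
    then have "t * a\<^sup>2 \<le> t * x\<^sup>2"
      using assms by (intro mult_left_mono) (auto simp: abs_le_square_iff[symmetric])
    then have "ennreal (exp (- t * x\<^sup>2)) \<le> ennreal (exp (- t * a\<^sup>2))"
      by (intro ennreal_leI) simp
    then show ?thesis
      by (simp add: mult.commute mult_left_mono add_increasing)
  qed
  have "(\<integral>\<^sup>+x. ennreal (exp (- t * x\<^sup>2)) \<partial>std_gaussian)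
      = (\<integral>\<^sup>+x. ennreal (std_normal_density x) * ennreal (exp (- t * x\<^sup>2)) \<partial>lborel)"
    by (rule nn_integral_std_gaussian) simp
  also have "\<dots> \<le> (\<integral>\<^sup>+x. indicator {-a..a} x + ennreal (exp (- t * a\<^sup>2)) * ennreal (std_normal_density x) \<partial>lborel)"
    by (rule nn_integral_mono) (rule pointwise)
  also have "\<dots> = emeasure lborel {-a..a} + ennreal (exp (- t * a\<^sup>2)) * emeasure std_gaussian UNIV"
    by (subst nn_integral_add) (auto simp: nn_integral_cmult std_gaussian_def emeasure_density)
  also have "\<dots> = ennreal (2 * a + exp (- t * a\<^sup>2))"
    using assms prob_space.emeasure_space_1[OF prob_space_std_gaussian] by (simp add: ennreal_plus)
  finally show ?thesis .
qed

lemma nn_integral_PiM_std_gaussian_exp_sum_square: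
  assumes "finite I"
  shows "(\<integral>\<^sup>+g. ennreal (exp (- t * (\<Sum>i\<in>I. (g i)\<^sup>2))) \<partial>\<Pi>\<^sub>M i\<in>I. std_gaussian)
    = (\<integral>\<^sup>+x. ennreal (exp (- t * x\<^sup>2)) \<partial>std_gaussian) ^ card I"
proof -
  interpret product_prob_space "\<lambda>_. std_gaussian" I
    by (intro product_prob_spaceI prob_space_std_gaussian)
  have "ennreal (exp (- t * (\<Sum>i\<in>I. (g i)\<^sup>2))) = (\<Prod>i\<in>I. ennreal (exp (- t * (g i)\<^sup>2)))" for g
    using assms by (simp add: sum_distrib_left exp_sum prod_ennreal)
  then show ?thesis
    using product_nn_integral_prod[OF assms, of "\<lambda>_ x. ennreal (exp (- t * x\<^sup>2))"] by simp
qed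

(* With t = 48 * 96^2 the bound above (at a = 1/96) gives E exp(-t x^2) <= 1/24, so the Chernoff
   bound for |g|^2 <= (ln 2 / t) N costs exp(ln 2 * N) (1/24)^N = (1/12)^N. *)
definition chi_square_lower_ratio :: real where
  "chi_square_lower_ratio = ln 2 / (48 * 96\<^sup>2)"

lemma chi_square_lower_ratio_pos: "0 < chi_square_lower_ratio"
  by (simp add: chi_square_lower_ratio_def)

lemma emeasure_PiM_std_gaussian_sum_square_le:
  assumes "finite I" "I \<noteq> {}"
  shows "emeasure (\<Pi>\<^sub>M i\<in>I. std_gaussian)
    {g \<in> space (\<Pi>\<^sub>M i\<in>I. std_gaussian). (\<Sum>i\<in>I. (g i)\<^sup>2) \<le> chi_square_lower_ratio * card I}
    \<le> ennreal (1 / 12)"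
proof -
  define t :: real where "t = 48 * 96\<^sup>2"
  define N where "N = card I"
  have "1 \<le> N"
    using assms by (simp add: N_def Suc_le_eq card_gt_0_iff)
  have [measurable]: "(\<lambda>g. \<Sum>i\<in>I. (g i)\<^sup>2) \<in> borel_measurable (\<Pi>\<^sub>M i\<in>I. std_gaussian)"
    using measurable_PiM_std_gaussian_coord by (intro borel_measurable_sum borel_measurable_power) auto
  have "(\<integral>\<^sup>+x. ennreal (exp (- t * x\<^sup>2)) \<partial>std_gaussian) \<le> ennreal (2 * (1 / 96) + exp (- t * (1 / 96)\<^sup>2))"
    unfolding t_def by (intro nn_integral_std_gaussian_exp_neg_square_le) auto
  also have "\<dots> \<le> ennreal (1 / 24)"
    using exp_ge_add_one_self[of 48] by (intro ennreal_leI) (simp add: t_def exp_minus field_simps)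
  finally have gauss_exp: "(\<integral>\<^sup>+x. ennreal (exp (- t * x\<^sup>2)) \<partial>std_gaussian) \<le> ennreal (1 / 24)" .
  have "emeasure (\<Pi>\<^sub>M i\<in>I. std_gaussian)
      {g \<in> space (\<Pi>\<^sub>M i\<in>I. std_gaussian). (\<Sum>i\<in>I. (g i)\<^sup>2) \<le> chi_square_lower_ratio * N}
    \<le> ennreal (exp (t * (chi_square_lower_ratio * N)))
       * (\<integral>\<^sup>+g. ennreal (exp (- t * (\<Sum>i\<in>I. (g i)\<^sup>2))) \<partial>\<Pi>\<^sub>M i\<in>I. std_gaussian)"
    using Chernoff_ineq_nn_integral_le[of t "space (\<Pi>\<^sub>M i\<in>I. std_gaussian)" "\<Pi>\<^sub>M i\<in>I. std_gaussian"
        "\<lambda>g. \<Sum>i\<in>I. (g i)\<^sup>2" "chi_square_lower_ratio * N"]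
    by (simp add: t_def indicator_def cong: nn_integral_cong)
  also have "\<dots> \<le> ennreal (2 ^ N) * ennreal (1 / 24) ^ N"
    unfolding nn_integral_PiM_std_gaussian_exp_sum_square[OF assms(1)] N_def[symmetric]
    by (intro mult_mono power_mono gauss_exp) (auto simp: chi_square_lower_ratio_def t_def exp_of_nat2_mult)
  also have "\<dots> = ennreal ((1 / 12) ^ N)"
    by (simp add: ennreal_power ennreal_mult[symmetric] power_mult_distrib[symmetric])
  also have "\<dots> \<le> ennreal (1 / 12)"
    using \<open>1 \<le> N\<close> by (intro ennreal_leI) (simp add: power_decreasing[of 1 N "1/12::real", simplified])
  finally show ?thesis
    unfolding N_def .
qed

section \<open>Kronecker-structured query vectors\<close>

lemma finite_kron_index [simp]: "finite (kron_index d k)"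
  unfolding kron_index_def by (simp add: finite_PiE)

lemma card_kron_index: "card (kron_index d k) = d ^ k"
  unfolding kron_index_def by (simp add: card_PiE)

lemma kron_index_less: "i \<in> kron_index d k \<Longrightarrow> j < k \<Longrightarrow> i j < d"
  unfolding kron_index_def by auto

lemma sum_kron_vec_square: "(\<Sum>i\<in>kron_index d k. (kron_vec k X i)\<^sup>2) = (\<Prod>j<k. \<Sum>a<d. (X j a)\<^sup>2)"
  unfolding kron_index_def kron_vec_def
  by (subst prod_sum_PiE) (auto simp: prod_power_distrib)

lemma prob_space_query_dist: "prob_space (query_dist d k rad)"
  unfolding query_dist_def by (intro prob_space_PiM prob_space_entry_dist)

lemma measurable_query_dist_entry:
  assumes "j < k" "a < d"
  shows "(\<lambda>X. X j a) \<in> borel_measurable (query_dist d k rad)"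
proof -
  have "(\<lambda>X. X j) \<in> measurable (query_dist d k rad) (\<Pi>\<^sub>M a\<in>{..<d}. entry_dist (rad j))"
    unfolding query_dist_def using assms(1) by (intro measurable_component_singleton) simp
  moreover have "(\<lambda>v. v a) \<in> borel_measurable (\<Pi>\<^sub>M a\<in>{..<d}. entry_dist (rad j))"
    using measurable_component_singleton[of a "{..<d}" "\<lambda>_. entry_dist (rad j)"] assms(2)
    unfolding measurable_cong_sets[OF refl sets_entry_dist] by simp
  ultimately show ?thesis
    by (rule measurable_compose)
qed

lemma integral_query_dist_kron_vec_mult:
  assumes "i \<in> kron_index d k" "i' \<in> kron_index d k"
  shows "integrable (query_dist d k rad) (\<lambda>X. kron_vec k X i * kron_vec k X i')"
    and "(\<integral>X. kron_vec k X i * kron_vec k X i' \<partial>query_dist d k rad) = (if i = i' then 1 else 0)"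
proof -
  interpret product_prob_space "\<lambda>j. \<Pi>\<^sub>M a\<in>{..<d}. entry_dist (rad j)" "{..<k}"
    by (intro product_prob_spaceI prob_space_PiM prob_space_entry_dist)
  have factor: "integrable (\<Pi>\<^sub>M a\<in>{..<d}. entry_dist (rad j)) (\<lambda>v. v (i j) * v (i' j))"
    "(\<integral>v. v (i j) * v (i' j) \<partial>\<Pi>\<^sub>M a\<in>{..<d}. entry_dist (rad j)) = (if i j = i' j then 1 else 0)"
    if "j \<in> {..<k}" for j
    using kron_index_less[OF assms(1)] kron_index_less[OF assms(2)] that
    by (simp_all add: integral_PiM_coord_mult[OF prob_space_entry_dist integrable_entry_dist_power[of _ 1, simplified]
        integrable_entry_dist_power integral_entry_dist_mean integral_entry_dist_square])
  have split: "(\<lambda>X. kron_vec k X i * kron_vec k X i') = (\<lambda>X. \<Prod>j\<in>{..<k}. X j (i j) * X j (i' j))"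
    by (simp add: kron_vec_def prod.distrib fun_eq_iff)
  show "integrable (query_dist d k rad) (\<lambda>X. kron_vec k X i * kron_vec k X i')"
    unfolding query_dist_def split by (intro product_integrable_prod factor) auto
  have "(\<integral>X. kron_vec k X i * kron_vec k X i' \<partial>query_dist d k rad) = (\<Prod>j<k. if i j = i' j then 1 else 0)"
    unfolding query_dist_def split by (subst product_integral_prod) (auto simp: factor)
  also have "\<dots> = (if i = i' then 1 else 0)"
  proof (cases "i = i'")
    case False
    then obtain j where "j < k" "i j \<noteq> i' j"
      using PiE_ext[of i "{..<k}" "\<lambda>_. {..<d}" i'] assms by (auto simp: kron_index_def)
    then show ?thesis
      using False by (auto intro: prod_zero)
  qed simp
  finally show "(\<integral>X. kron_vec k X i * kron_vec k X i' \<partial>query_dist d k rad) = (if i = i' then 1 else 0)" .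
qed

lemma nn_integral_query_dist_kron_norm_fourth_le:
  "(\<integral>\<^sup>+X. ennreal ((\<Sum>i\<in>kron_index d k. (kron_vec k X i)\<^sup>2)\<^sup>2) \<partial>query_dist d k rad)
    \<le> ennreal (((real d)\<^sup>2 + 2 * real d) ^ k)"
proof -
  interpret product_prob_space "\<lambda>j. \<Pi>\<^sub>M a\<in>{..<d}. entry_dist (rad j)" "{..<k}"
    by (intro product_prob_spaceI prob_space_PiM prob_space_entry_dist)
  have factor: "(\<lambda>X. ennreal ((\<Sum>i\<in>kron_index d k. (kron_vec k X i)\<^sup>2)\<^sup>2))
      = (\<lambda>X. \<Prod>j\<in>{..<k}. ennreal ((\<Sum>a<d. (X j a)\<^sup>2)\<^sup>2))"
    unfolding sum_kron_vec_square by (simp add: prod_ennreal prod_power_distrib fun_eq_iff)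
  have "(\<integral>\<^sup>+X. ennreal ((\<Sum>i\<in>kron_index d k. (kron_vec k X i)\<^sup>2)\<^sup>2) \<partial>query_dist d k rad)
      = (\<Prod>j<k. \<integral>\<^sup>+v. ennreal ((\<Sum>a<d. (v a)\<^sup>2)\<^sup>2) \<partial>\<Pi>\<^sub>M a\<in>{..<d}. entry_dist (rad j))"
    unfolding query_dist_def factor by (rule product_nn_integral_prod) auto
  also have "\<dots> \<le> (\<Prod>j<k. ennreal ((real d)\<^sup>2 + 2 * real d))"
    using nn_integral_PiM_sum_squares_square_le[OF prob_space_entry_dist sets_entry_dist
        nn_integral_entry_dist_square nn_integral_entry_dist_fourth_le, of "{..<d}"]
    by (intro prod_mono_ennreal) simp
  also have "\<dots> = ennreal (((real d)\<^sup>2 + 2 * real d) ^ k)"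
    by (simp add: ennreal_power del: ennreal_plus)
  finally show ?thesis .
qed

lemma quad_form_eq_square: "quad_form d k g X = (\<Sum>i\<in>kron_index d k. g i * kron_vec k X i)\<^sup>2"
  unfolding quad_form_def matA_def power2_eq_square sum_product
  by (intro sum.cong refl) (simp add: algebra_simps)

lemma traceA_eq_sum_square: "traceA d k g = (\<Sum>i\<in>kron_index d k. (g i)\<^sup>2)"
  unfolding traceA_def matA_def by (simp add: power2_eq_square)

lemma integrable_query_dist_quad_form: "integrable (query_dist d k rad) (quad_form d k g)"
  and integral_query_dist_quad_form: "(\<integral>X. quad_form d k g X \<partial>query_dist d k rad) = traceA d k g"
proof -
  have expand: "quad_form d k g = (\<lambda>X. \<Sum>i\<in>kron_index d k. \<Sum>i'\<in>kron_index d k.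
      (g i * g i') * (kron_vec k X i * kron_vec k X i'))"
    unfolding quad_form_def matA_def by (simp add: fun_eq_iff algebra_simps)
  show "integrable (query_dist d k rad) (quad_form d k g)"
    unfolding expand by (intro Bochner_Integration.integrable_sum integrable_mult_right
        integral_query_dist_kron_vec_mult(1))
  have "(\<integral>X. quad_form d k g X \<partial>query_dist d k rad)
      = (\<Sum>i\<in>kron_index d k. \<Sum>i'\<in>kron_index d k. (g i * g i') * (if i = i' then 1 else 0))"
    unfolding expand
    by (simp add: Bochner_Integration.integral_sum Bochner_Integration.integrable_sum
        integral_query_dist_kron_vec_mult integrable_mult_right cong: sum.cong)
  also have "\<dots> = traceA d k g"
    by (simp add: traceA_eq_sum_square power2_eq_square if_distrib sum.delta cong: if_cong)
  finally show "(\<integral>X. quad_form d k g X \<partial>query_dist d k rad) = traceA d k g" .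
qed

lemma borel_measurable_quad_form: "quad_form d k g \<in> borel_measurable (query_dist d k rad)"
  unfolding quad_form_def[abs_def] kron_vec_def
  by (intro borel_measurable_sum borel_measurable_times borel_measurable_prod measurable_query_dist_entry
      borel_measurable_const) (auto simp: kron_index_less)

section \<open>Sample means\<close>

lemma integral_PiM_sample_mean_deviation_square:
  fixes f :: "'a \<Rightarrow> real"
  assumes "prob_space M" "f \<in> borel_measurable M" "integrable M (\<lambda>x. (f x)\<^sup>2)"
    and "(\<integral>x. f x \<partial>M) = \<mu>" "(\<integral>x. (f x - \<mu>)\<^sup>2 \<partial>M) = V" and "0 < l"
  shows "integrable (\<Pi>\<^sub>M s\<in>{..<l}. M) (\<lambda>Xs. ((1 / real l) * (\<Sum>s<l. f (Xs s)) - \<mu>)\<^sup>2)"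
    and "(\<integral>Xs. ((1 / real l) * (\<Sum>s<l. f (Xs s)) - \<mu>)\<^sup>2 \<partial>\<Pi>\<^sub>M s\<in>{..<l}. M) = V / real l"
proof -
  interpret product_prob_space "\<lambda>_. M" "{..<l}"
    by (intro product_prob_spaceI assms(1))
  have "integrable M f"
    using assms(2,3) by (rule M.square_integrable_imp_integrable)
  then have centred: "integrable M (\<lambda>x. f x - \<mu>)" "integrable M (\<lambda>x. (f x - \<mu>) * (f x - \<mu>))"
    "(\<integral>x. f x - \<mu> \<partial>M) = 0" "(\<integral>x. (f x - \<mu>) * (f x - \<mu>) \<partial>M) = V"
    using assms(3,4,5) M.prob_space by (auto simp: power2_eq_square algebra_simps)
  note pair = integral_PiM_coord_pair[where f="\<lambda>_ x. f x - \<mu>", OF finite_lessThan _ _ centred(1,2)]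
  have cov: "(\<integral>Xs. (f (Xs s) - \<mu>) * (f (Xs s') - \<mu>) \<partial>\<Pi>\<^sub>M s\<in>{..<l}. M) = (if s = s' then V else 0)"
    if "s < l" "s' < l" for s s'
    using pair(2)[of s s'] that centred(3,4) by simp
  have square: "((1 / real l) * (\<Sum>s<l. f (Xs s)) - \<mu>)\<^sup>2
      = (1 / real l)\<^sup>2 * (\<Sum>s<l. \<Sum>s'<l. (f (Xs s) - \<mu>) * (f (Xs s') - \<mu>))" for Xs
  proof -
    have "(1 / real l) * (\<Sum>s<l. f (Xs s)) - \<mu> = (1 / real l) * (\<Sum>s<l. f (Xs s) - \<mu>)"
      using assms(6) by (simp add: sum_subtractf field_simps)
    then show ?thesis
      by (simp add: power_mult_distrib power2_eq_square sum_product)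
  qed
  show "integrable (\<Pi>\<^sub>M s\<in>{..<l}. M) (\<lambda>Xs. ((1 / real l) * (\<Sum>s<l. f (Xs s)) - \<mu>)\<^sup>2)"
    unfolding square using pair(1) by (auto intro!: Bochner_Integration.integrable_sum)
  have "(\<integral>Xs. ((1 / real l) * (\<Sum>s<l. f (Xs s)) - \<mu>)\<^sup>2 \<partial>\<Pi>\<^sub>M s\<in>{..<l}. M)
      = (1 / real l)\<^sup>2 * (\<Sum>s<l. \<integral>Xs. (\<Sum>s'<l. (f (Xs s) - \<mu>) * (f (Xs s') - \<mu>)) \<partial>\<Pi>\<^sub>M s\<in>{..<l}. M)"
    unfolding square integral_mult_right_zero
    by (subst Bochner_Integration.integral_sum) (auto intro: pair(1))
  also have "\<dots> = (1 / real l)\<^sup>2 * (\<Sum>s<l. \<Sum>s'<l. \<integral>Xs. (f (Xs s) - \<mu>) * (f (Xs s') - \<mu>) \<partial>\<Pi>\<^sub>M s\<in>{..<l}. M)"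
    by (intro arg_cong2[where f=times] refl sum.cong Bochner_Integration.integral_sum) (auto intro: pair(1))
  also have "\<dots> = (1 / real l)\<^sup>2 * (\<Sum>s<l. \<Sum>s'<l. if s = s' then V else 0)"
    using cov by simp
  also have "\<dots> = V / real l"
    using assms(6) by (simp add: power2_eq_square)
  finally show "(\<integral>Xs. ((1 / real l) * (\<Sum>s<l. f (Xs s)) - \<mu>)\<^sup>2 \<partial>\<Pi>\<^sub>M s\<in>{..<l}. M) = V / real l" .
qed

lemma measure_PiM_sample_mean_deviation_le:
  fixes f :: "'a \<Rightarrow> real"
  assumes "prob_space M" "f \<in> borel_measurable M" "integrable M (\<lambda>x. (f x)\<^sup>2)"
    and "(\<integral>x. f x \<partial>M) = \<mu>" "(\<integral>x. (f x - \<mu>)\<^sup>2 \<partial>M) = V" and "0 < l" "0 < a"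
  shows "measure (\<Pi>\<^sub>M s\<in>{..<l}. M)
    {Xs \<in> space (\<Pi>\<^sub>M s\<in>{..<l}. M). a \<le> \<bar>(1 / real l) * (\<Sum>s<l. f (Xs s)) - \<mu>\<bar>} \<le> V / (real l * a\<^sup>2)"
proof -
  interpret P: prob_space "\<Pi>\<^sub>M s\<in>{..<l}. M"
    by (intro prob_space_PiM assms(1))
  have "(\<lambda>Xs. f (Xs s)) \<in> borel_measurable (\<Pi>\<^sub>M s\<in>{..<l}. M)" if "s < l" for s
  proof -
    have "(\<lambda>Xs. Xs s) \<in> measurable (\<Pi>\<^sub>M s\<in>{..<l}. M) M"
      using that by (intro measurable_component_singleton) simp
    then show ?thesis
      using assms(2) by (rule measurable_compose)
  qed
  then have "(\<lambda>Xs. (1 / real l) * (\<Sum>s<l. f (Xs s)) - \<mu>) \<in> borel_measurable (\<Pi>\<^sub>M s\<in>{..<l}. M)"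
    by (intro borel_measurable_diff borel_measurable_times borel_measurable_sum) auto
  from P.second_moment_method[OF this integral_PiM_sample_mean_deviation_square(1)[OF assms(1-6)] assms(7)]
  show ?thesis
    using integral_PiM_sample_mean_deviation_square(2)[OF assms(1-6)] by (simp add: field_simps)
qed

section \<open>The conditional variance of the quadratic form\<close>

lemma prob_space_gauss_vec: "prob_space (gauss_vec d k)"
  unfolding gauss_vec_def by (intro prob_space_PiM prob_space_std_gaussian)

lemma borel_measurable_traceA: "traceA d k \<in> borel_measurable (gauss_vec d k)"
  unfolding traceA_eq_sum_square gauss_vec_def
  using measurable_PiM_std_gaussian_coord by (intro borel_measurable_sum borel_measurable_power) auto

lemma borel_measurable_quad_form_pair:
  "(\<lambda>p. quad_form d k (fst p) (snd p)) \<in> borel_measurable (gauss_vec d k \<Otimes>\<^sub>M query_dist d k rad)"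
proof -
  have "(\<lambda>p. fst p i) \<in> borel_measurable (gauss_vec d k \<Otimes>\<^sub>M query_dist d k rad)"
    if "i \<in> kron_index d k" for i
    using measurable_compose[OF measurable_fst measurable_PiM_std_gaussian_coord[OF that]]
    by (simp add: gauss_vec_def)
  moreover have "(\<lambda>p. snd p j a) \<in> borel_measurable (gauss_vec d k \<Otimes>\<^sub>M query_dist d k rad)"
    if "j < k" "a < d" for j a
    using measurable_compose[OF measurable_snd measurable_query_dist_entry[OF that]] .
  ultimately show ?thesis
    unfolding quad_form_def kron_vec_def matA_def
    by (intro borel_measurable_sum borel_measurable_times borel_measurable_prod) (auto simp: kron_index_less)
qed

definition quad_second_moment :: "nat \<Rightarrow> nat \<Rightarrow> (nat \<Rightarrow> bool) \<Rightarrow> ((nat \<Rightarrow> nat) \<Rightarrow> real) \<Rightarrow> ennreal" where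
  "quad_second_moment d k rad g = (\<integral>\<^sup>+X. ennreal ((quad_form d k g X)\<^sup>2) \<partial>query_dist d k rad)"

lemma borel_measurable_quad_second_moment:
  "quad_second_moment d k rad \<in> borel_measurable (gauss_vec d k)"
proof -
  interpret X: prob_space "query_dist d k rad"
    by (rule prob_space_query_dist)
  have "(\<lambda>(g, X). ennreal ((quad_form d k g X)\<^sup>2)) \<in> borel_measurable (gauss_vec d k \<Otimes>\<^sub>M query_dist d k rad)"
    using borel_measurable_quad_form_pair by (simp add: case_prod_beta')
  then show ?thesis
    unfolding quad_second_moment_def[abs_def] by (rule X.borel_measurable_nn_integral)
qed

lemma nn_integral_quad_second_moment_le:
  "(\<integral>\<^sup>+g. quad_second_moment d k rad g \<partial>gauss_vec d k) \<le> ennreal (3 * ((real d)\<^sup>2 + 2 * real d) ^ k)"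
proof -
  interpret G: prob_space "gauss_vec d k"
    by (rule prob_space_gauss_vec)
  interpret X: prob_space "query_dist d k rad"
    by (rule prob_space_query_dist)
  interpret pair_sigma_finite "gauss_vec d k" "query_dist d k rad" ..
  have "(\<lambda>(g, X). ennreal ((quad_form d k g X)\<^sup>2)) \<in> borel_measurable (gauss_vec d k \<Otimes>\<^sub>M query_dist d k rad)"
    using borel_measurable_quad_form_pair by (simp add: case_prod_beta')
  then have "(\<integral>\<^sup>+g. quad_second_moment d k rad g \<partial>gauss_vec d k)
      = (\<integral>\<^sup>+X. (\<integral>\<^sup>+g. ennreal ((quad_form d k g X)\<^sup>2) \<partial>gauss_vec d k) \<partial>query_dist d k rad)"
    unfolding quad_second_moment_def by (rule Fubini'[symmetric])
  also have "\<dots> = (\<integral>\<^sup>+X. ennreal (3 * (\<Sum>i\<in>kron_index d k. (kron_vec k X i)\<^sup>2)\<^sup>2) \<partial>query_dist d k rad)"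
  proof (intro nn_integral_cong)
    fix X
    have "(quad_form d k g X)\<^sup>2 = (\<Sum>i\<in>kron_index d k. kron_vec k X i * g i) ^ 4" for g
      unfolding quad_form_eq_square by (simp add: mult.commute power_mult[symmetric])
    then show "(\<integral>\<^sup>+g. ennreal ((quad_form d k g X)\<^sup>2) \<partial>gauss_vec d k)
        = ennreal (3 * (\<Sum>i\<in>kron_index d k. (kron_vec k X i)\<^sup>2)\<^sup>2)"
      by (simp add: gauss_vec_def nn_integral_PiM_std_gaussian_linear_fourth)
  qed
  also have "\<dots> = 3 * (\<integral>\<^sup>+X. ennreal ((\<Sum>i\<in>kron_index d k. (kron_vec k X i)\<^sup>2)\<^sup>2) \<partial>query_dist d k rad)"
  proof -
    have "(\<lambda>X. (\<Sum>i\<in>kron_index d k. (kron_vec k X i)\<^sup>2)\<^sup>2) \<in> borel_measurable (query_dist d k rad)"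
      unfolding kron_vec_def
      by (intro borel_measurable_power borel_measurable_sum borel_measurable_prod measurable_query_dist_entry)
        (auto simp: kron_index_less)
    then show ?thesis
      by (subst nn_integral_cmult[symmetric]) (auto simp: ennreal_mult)
  qed
  also have "\<dots> \<le> 3 * ennreal (((real d)\<^sup>2 + 2 * real d) ^ k)"
    by (intro mult_left_mono nn_integral_query_dist_kron_norm_fourth_le) simp
  finally show ?thesis
    by (simp add: ennreal_mult)
qed

lemma emeasure_quad_second_moment_gt_le:
  assumes "1 \<le> d"
  shows "emeasure (gauss_vec d k)
    {g \<in> space (gauss_vec d k). ennreal (36 * ((real d)\<^sup>2 + 2 * real d) ^ k) < quad_second_moment d k rad g}
    \<le> ennreal (1 / 12)"
proof -
  define B where "B = 36 * ((real d)\<^sup>2 + 2 * real d) ^ k"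
  have "0 < B"
    using assms by (simp add: B_def add_pos_nonneg)
  let ?A = "{g \<in> space (gauss_vec d k). ennreal B < quad_second_moment d k rad g}"
  have [measurable]: "quad_second_moment d k rad \<in> borel_measurable (gauss_vec d k)"
    by (rule borel_measurable_quad_second_moment)
  have "indicator ?A g \<le> quad_second_moment d k rad g * ennreal (1 / B)" for g
  proof (cases "g \<in> ?A")
    case True
    then have "ennreal B * ennreal (1 / B) \<le> quad_second_moment d k rad g * ennreal (1 / B)"
      by (intro mult_right_mono) auto
    then show ?thesis
      using True \<open>0 < B\<close> by (simp add: ennreal_mult[symmetric])
  qed simp
  then have "(\<integral>\<^sup>+g. indicator ?A g \<partial>gauss_vec d k)
      \<le> (\<integral>\<^sup>+g. quad_second_moment d k rad g * ennreal (1 / B) \<partial>gauss_vec d k)"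
    by (rule nn_integral_mono)
  then have "emeasure (gauss_vec d k) ?A \<le> (\<integral>\<^sup>+g. quad_second_moment d k rad g * ennreal (1 / B) \<partial>gauss_vec d k)"
    by simp
  also have "\<dots> = (\<integral>\<^sup>+g. quad_second_moment d k rad g \<partial>gauss_vec d k) * ennreal (1 / B)"
    by (rule nn_integral_multc) simp
  also have "\<dots> \<le> ennreal (3 * ((real d)\<^sup>2 + 2 * real d) ^ k) * ennreal (1 / B)"
    by (intro mult_right_mono nn_integral_quad_second_moment_le) simp
  also have "\<dots> = ennreal (1 / 12)"
    using \<open>0 < B\<close> assms by (simp add: B_def ennreal_mult[symmetric] add_nonneg_eq_0_iff)
  finally show ?thesis
    unfolding B_def .
qed

definition good_gauss :: "nat \<Rightarrow> nat \<Rightarrow> (nat \<Rightarrow> bool) \<Rightarrow> ((nat \<Rightarrow> nat) \<Rightarrow> real) set" where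
  "good_gauss d k rad = {g \<in> space (gauss_vec d k).
     quad_second_moment d k rad g \<le> ennreal (36 * ((real d)\<^sup>2 + 2 * real d) ^ k)
     \<and> chi_square_lower_ratio * real (d ^ k) < traceA d k g}"

lemma sets_good_gauss: "good_gauss d k rad \<in> sets (gauss_vec d k)"
  using borel_measurable_quad_second_moment[of d k rad] borel_measurable_traceA[of d k]
  unfolding good_gauss_def by measurable

lemma emeasure_compl_good_gauss_le:
  assumes "1 \<le> d"
  shows "emeasure (gauss_vec d k) (space (gauss_vec d k) - good_gauss d k rad) \<le> ennreal (1 / 6)"
proof -
  let ?G = "gauss_vec d k"
  define A1 where "A1 = {g \<in> space ?G. ennreal (36 * ((real d)\<^sup>2 + 2 * real d) ^ k) < quad_second_moment d k rad g}"
  define A2 where "A2 = {g \<in> space ?G. (\<Sum>i\<in>kron_index d k. (g i)\<^sup>2) \<le> chi_square_lower_ratio * card (kron_index d k)}"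
  have [measurable]: "quad_second_moment d k rad \<in> borel_measurable ?G" "traceA d k \<in> borel_measurable ?G"
    by (rule borel_measurable_quad_second_moment borel_measurable_traceA)+
  have "A1 \<in> sets ?G" "A2 \<in> sets ?G"
    unfolding A1_def A2_def traceA_eq_sum_square[symmetric] by measurable
  have "space ?G - good_gauss d k rad \<subseteq> A1 \<union> A2"
    unfolding good_gauss_def A1_def A2_def by (auto simp: card_kron_index traceA_eq_sum_square not_le)
  then have "emeasure ?G (space ?G - good_gauss d k rad) \<le> emeasure ?G A1 + emeasure ?G A2"
    using \<open>A1 \<in> sets ?G\<close> \<open>A2 \<in> sets ?G\<close> by (meson emeasure_mono emeasure_subadditive order_trans sets.Un)
  also have "\<dots> \<le> ennreal (1 / 12) + ennreal (1 / 12)"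
  proof (intro add_mono)
    show "emeasure ?G A1 \<le> ennreal (1 / 12)"
      unfolding A1_def using assms by (rule emeasure_quad_second_moment_gt_le)
    have "kron_index d k \<noteq> {}"
      using assms card_kron_index[of d k] by (metis card.empty not_one_le_zero power_not_zero)
    then show "emeasure ?G A2 \<le> ennreal (1 / 12)"
      unfolding A2_def gauss_vec_def by (intro emeasure_PiM_std_gaussian_sum_square_le) auto
  qed
  also have "\<dots> = ennreal (1 / 6)"
    by (simp flip: ennreal_plus)
  finally show ?thesis .
qed

lemma traceA_pos_of_good_gauss: "g \<in> good_gauss d k rad \<Longrightarrow> 0 < traceA d k g"
  unfolding good_gauss_def using chi_square_lower_ratio_pos
  by (auto intro: order.strict_trans1[rotated])

lemma integrable_quad_form_square_of_good_gauss:
  assumes "g \<in> good_gauss d k rad"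
  shows "integrable (query_dist d k rad) (\<lambda>X. (quad_form d k g X)\<^sup>2)"
proof -
  have "(\<integral>\<^sup>+X. ennreal (norm ((quad_form d k g X)\<^sup>2)) \<partial>query_dist d k rad) = quad_second_moment d k rad g"
    unfolding quad_second_moment_def by simp
  also have "\<dots> < \<infinity>"
    using assms by (auto simp: good_gauss_def intro: le_less_trans)
  finally show ?thesis
    using borel_measurable_quad_form by (auto simp: integrable_iff_bounded)
qed

definition variance_const :: real where
  "variance_const = 36 / chi_square_lower_ratio\<^sup>2"

lemma variance_const_pos: "0 < variance_const"
  using chi_square_lower_ratio_pos by (simp add: variance_const_def)

lemma var_of_quad_form_le_of_good_gauss:
  assumes "1 \<le> d" "g \<in> good_gauss d k rad"
  shows "var_of (query_dist d k rad) (quad_form d k g) \<le> variance_const * (2 + 1 / real d) ^ k * (traceA d k g)\<^sup>2"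
proof -
  interpret X: prob_space "query_dist d k rad"
    by (rule prob_space_query_dist)
  let ?\<delta> = chi_square_lower_ratio and ?N = "real (d ^ k)"
  have "var_of (query_dist d k rad) (quad_form d k g)
      = (\<integral>X. (quad_form d k g X)\<^sup>2 \<partial>query_dist d k rad) - (traceA d k g)\<^sup>2"
    using X.variance_eq[OF integrable_query_dist_quad_form integrable_quad_form_square_of_good_gauss[OF assms(2)]]
    unfolding var_of_def integral_query_dist_quad_form .
  also have "\<dots> \<le> enn2real (quad_second_moment d k rad g)"
    unfolding quad_second_moment_def
    by (subst integral_eq_nn_integral) (auto intro!: borel_measurable_power borel_measurable_quad_form)
  also have "\<dots> \<le> 36 * ((real d)\<^sup>2 + 2 * real d) ^ k"
    using assms(2) by (intro enn2real_leI) (auto simp: good_gauss_def)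
  also have "\<dots> = 36 * ?N\<^sup>2 * (1 + 2 / real d) ^ k"
  proof -
    have "(real d)\<^sup>2 + 2 * real d = (real d)\<^sup>2 * (1 + 2 / real d)"
      using assms(1) by (simp add: field_simps power2_eq_square)
    then show ?thesis
      by (simp add: power_mult_distrib power_mult[symmetric] mult.commute[of 2 k])
  qed
  also have "\<dots> \<le> 36 * ((traceA d k g)\<^sup>2 / ?\<delta>\<^sup>2) * (2 + 1 / real d) ^ k"
  proof (intro mult_mono mult_left_mono power_mono)
    have "(?\<delta> * ?N)\<^sup>2 \<le> (traceA d k g)\<^sup>2"
      using assms(2) chi_square_lower_ratio_pos by (intro power_mono) (auto simp: good_gauss_def)
    then show "?N\<^sup>2 \<le> (traceA d k g)\<^sup>2 / ?\<delta>\<^sup>2"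
      using chi_square_lower_ratio_pos by (simp add: power_mult_distrib field_simps)
  qed (use assms(1) in \<open>auto simp: field_simps\<close>)
  also have "\<dots> = variance_const * (2 + 1 / real d) ^ k * (traceA d k g)\<^sup>2"
    by (simp add: variance_const_def)
  finally show ?thesis .
qed

section \<open>The Kronecker-Hutchinson estimator\<close>

lemma borel_measurable_var_of_quad_form:
  "(\<lambda>g. var_of (query_dist d k rad) (quad_form d k g)) \<in> borel_measurable (gauss_vec d k)"
proof -
  interpret X: prob_space "query_dist d k rad"
    by (rule prob_space_query_dist)
  have "(\<lambda>(g, X). (quad_form d k g X - traceA d k g)\<^sup>2) \<in> borel_measurable (gauss_vec d k \<Otimes>\<^sub>M query_dist d k rad)"
    using borel_measurable_quad_form_pair[of d k rad]
      measurable_compose[OF measurable_fst borel_measurable_traceA, of d k "query_dist d k rad"]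
    by (simp add: case_prod_beta' borel_measurable_diff borel_measurable_power)
  then show ?thesis
    unfolding var_of_def integral_query_dist_quad_form by (rule X.borel_measurable_lebesgue_integral)
qed

lemma measure_var_of_quad_form_le:
  assumes "1 \<le> d" "variance_const \<le> C"
  shows "measure (gauss_vec d k) {g \<in> space (gauss_vec d k).
      var_of (query_dist d k rad) (quad_form d k g) \<le> C * (2 + 1 / real d) ^ k * (traceA d k g)\<^sup>2} \<ge> 3 / 4"
proof -
  interpret G: prob_space "gauss_vec d k"
    by (rule prob_space_gauss_vec)
  let ?S = "{g \<in> space (gauss_vec d k).
      var_of (query_dist d k rad) (quad_form d k g) \<le> C * (2 + 1 / real d) ^ k * (traceA d k g)\<^sup>2}"
  have "?S \<in> sets (gauss_vec d k)"
    using borel_measurable_var_of_quad_form[of d k rad] borel_measurable_traceA[of d k] by measurable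
  have "good_gauss d k rad \<subseteq> ?S"
  proof
    fix g assume g: "g \<in> good_gauss d k rad"
    have "variance_const * (2 + 1 / real d) ^ k * (traceA d k g)\<^sup>2 \<le> C * (2 + 1 / real d) ^ k * (traceA d k g)\<^sup>2"
      using assms(2) by (intro mult_right_mono) auto
    then show "g \<in> ?S"
      using var_of_quad_form_le_of_good_gauss[OF assms(1) g] g by (auto simp: good_gauss_def)
  qed
  have "measure (gauss_vec d k) (space (gauss_vec d k) - good_gauss d k rad) \<le> 1 / 6"
    using emeasure_compl_good_gauss_le[OF assms(1), of k rad] by (simp add: G.emeasure_eq_measure)
  then have "5 / 6 \<le> measure (gauss_vec d k) (good_gauss d k rad)"
    using G.prob_compl[OF sets_good_gauss] by simp
  also have "\<dots> \<le> measure (gauss_vec d k) ?S"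
    using \<open>good_gauss d k rad \<subseteq> ?S\<close> \<open>?S \<in> sets (gauss_vec d k)\<close> by (rule G.finite_measure_mono)
  finally show ?thesis
    by simp
qed

lemma measure_hutch_deviation_le_of_good_gauss:
  assumes "1 \<le> d" "g \<in> good_gauss d k rad" "0 < \<epsilon>"
    and "6 * variance_const * (2 + 1 / real d) ^ k \<le> real l * \<epsilon>\<^sup>2"
  shows "measure (\<Pi>\<^sub>M s\<in>{..<l}. query_dist d k rad)
    {Xs \<in> space (\<Pi>\<^sub>M s\<in>{..<l}. query_dist d k rad). \<epsilon> * traceA d k g \<le> \<bar>hutch d k l g Xs - traceA d k g\<bar>}
    \<le> 1 / 6"
proof -
  let ?tr = "traceA d k g" and ?V = "var_of (query_dist d k rad) (quad_form d k g)"
  have "0 < ?tr"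
    using assms(2) by (rule traceA_pos_of_good_gauss)
  have "0 < 6 * variance_const * (2 + 1 / real d) ^ k"
    using variance_const_pos by (simp add: add_pos_nonneg)
  then have "0 < l"
    using assms(4) by (cases "l = 0") auto
  have "6 * ?V \<le> 6 * variance_const * (2 + 1 / real d) ^ k * ?tr\<^sup>2"
    using var_of_quad_form_le_of_good_gauss[OF assms(1,2)] by simp
  also have "\<dots> \<le> real l * (\<epsilon> * ?tr)\<^sup>2"
    using mult_right_mono[OF assms(4), of "?tr\<^sup>2"] by (simp add: power_mult_distrib)
  finally have "?V / (real l * (\<epsilon> * ?tr)\<^sup>2) \<le> 1 / 6"
    using \<open>0 < l\<close> \<open>0 < ?tr\<close> assms(3) by (simp add: divide_le_eq)
  moreover have "measure (\<Pi>\<^sub>M s\<in>{..<l}. query_dist d k rad)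
      {Xs \<in> space (\<Pi>\<^sub>M s\<in>{..<l}. query_dist d k rad). \<epsilon> * ?tr \<le> \<bar>hutch d k l g Xs - ?tr\<bar>}
      \<le> ?V / (real l * (\<epsilon> * ?tr)\<^sup>2)"
    unfolding hutch_def
  proof (rule measure_PiM_sample_mean_deviation_le)
    show "(\<integral>X. (quad_form d k g X - ?tr)\<^sup>2 \<partial>query_dist d k rad) = ?V"
      unfolding var_of_def integral_query_dist_quad_form ..
  qed (use assms(2,3) \<open>0 < l\<close> \<open>0 < ?tr\<close> in \<open>auto intro: prob_space_query_dist borel_measurable_quad_form
      integrable_quad_form_square_of_good_gauss integral_query_dist_quad_form\<close>)
  ultimately show ?thesis
    by linarith
qed

lemma borel_measurable_hutch_pair:
  "(\<lambda>p. hutch d k l (fst p) (snd p)) \<in> borel_measurable (gauss_vec d k \<Otimes>\<^sub>M (\<Pi>\<^sub>M s\<in>{..<l}. query_dist d k rad))"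
proof -
  have "(\<lambda>p. quad_form d k (fst p) (snd p s))
      \<in> borel_measurable (gauss_vec d k \<Otimes>\<^sub>M (\<Pi>\<^sub>M s\<in>{..<l}. query_dist d k rad))" if "s < l" for s
  proof -
    have "(\<lambda>p. (fst p, snd p s)) \<in> measurable (gauss_vec d k \<Otimes>\<^sub>M (\<Pi>\<^sub>M s\<in>{..<l}. query_dist d k rad))
        (gauss_vec d k \<Otimes>\<^sub>M query_dist d k rad)"
      using that by (intro measurable_Pair measurable_fst measurable_compose[OF measurable_snd]
          measurable_component_singleton) simp
    from measurable_compose[OF this borel_measurable_quad_form_pair] show ?thesis
      by simp
  qed
  then show ?thesis
    unfolding hutch_def by (intro borel_measurable_times borel_measurable_const borel_measurable_sum) simp
qed

lemma measure_hutch_accurate: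
  assumes "1 \<le> d" "0 < \<epsilon>" and l: "6 * variance_const / \<epsilon>\<^sup>2 * (2 + 1 / real d) ^ k \<le> real l"
  shows "measure (gauss_vec d k \<Otimes>\<^sub>M (\<Pi>\<^sub>M s\<in>{..<l}. query_dist d k rad))
    {(g, Xs) \<in> space (gauss_vec d k \<Otimes>\<^sub>M (\<Pi>\<^sub>M s\<in>{..<l}. query_dist d k rad)).
      (1 - \<epsilon>) * traceA d k g \<le> hutch d k l g Xs \<and> hutch d k l g Xs \<le> (1 + \<epsilon>) * traceA d k g} \<ge> 2 / 3"
proof -
  let ?G = "gauss_vec d k" and ?P = "\<Pi>\<^sub>M s\<in>{..<l}. query_dist d k rad"
  interpret G: prob_space ?G
    by (rule prob_space_gauss_vec)
  interpret P: prob_space ?P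
    by (intro prob_space_PiM prob_space_query_dist)
  interpret GP: prob_space "?G \<Otimes>\<^sub>M ?P"
    by (intro prob_space_pair G.prob_space_axioms P.prob_space_axioms)
  define Bad where "Bad = {p \<in> space (?G \<Otimes>\<^sub>M ?P).
    \<epsilon> * traceA d k (fst p) < \<bar>hutch d k l (fst p) (snd p) - traceA d k (fst p)\<bar>}"
  have hutch_meas [measurable]: "(\<lambda>p. hutch d k l (fst p) (snd p)) \<in> borel_measurable (?G \<Otimes>\<^sub>M ?P)"
    by (rule borel_measurable_hutch_pair)
  have [measurable]: "(\<lambda>p. traceA d k (fst p)) \<in> borel_measurable (?G \<Otimes>\<^sub>M ?P)"
    by (rule measurable_compose[OF measurable_fst borel_measurable_traceA])
  have "Bad \<in> sets (?G \<Otimes>\<^sub>M ?P)"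
    unfolding Bad_def by measurable
  have Bad_section: "emeasure ?P (Pair g -` Bad) \<le> indicator (space ?G - good_gauss d k rad) g + ennreal (1 / 6)"
    if "g \<in> space ?G" for g
  proof (cases "g \<in> good_gauss d k rad")
    case True
    let ?D = "{Xs \<in> space ?P. \<epsilon> * traceA d k g \<le> \<bar>hutch d k l g Xs - traceA d k g\<bar>}"
    have "(\<lambda>Xs. hutch d k l g Xs) \<in> borel_measurable ?P"
      using measurable_Pair2[OF hutch_meas that] by simp
    then have "?D \<in> sets ?P"
      by measurable
    moreover have "Pair g -` Bad \<subseteq> ?D"
      by (auto simp: Bad_def space_pair_measure)
    moreover have "6 * variance_const * (2 + 1 / real d) ^ k \<le> real l * \<epsilon>\<^sup>2"
      using l assms(2) by (simp add: field_simps)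
    ultimately have "measure ?P (Pair g -` Bad) \<le> 1 / 6"
      using P.finite_measure_mono measure_hutch_deviation_le_of_good_gauss[OF assms(1) True assms(2)]
      by (meson order_trans)
    then have "emeasure ?P (Pair g -` Bad) \<le> ennreal (1 / 6)"
      by (simp add: P.emeasure_eq_measure)
    then show ?thesis
      by (simp add: add_increasing)
  next
    case False
    then show ?thesis
      using that P.emeasure_le_1 by (simp add: add_increasing2)
  qed
  have "emeasure (?G \<Otimes>\<^sub>M ?P) Bad = (\<integral>\<^sup>+g. emeasure ?P (Pair g -` Bad) \<partial>?G)"
    by (rule P.emeasure_pair_measure_alt) fact
  also have "\<dots> \<le> (\<integral>\<^sup>+g. indicator (space ?G - good_gauss d k rad) g + ennreal (1 / 6) \<partial>?G)"
    by (intro nn_integral_mono Bad_section)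
  also have "\<dots> = emeasure ?G (space ?G - good_gauss d k rad) + ennreal (1 / 6)"
    using sets_good_gauss by (subst nn_integral_add) (auto simp: G.emeasure_space_1)
  also have "\<dots> \<le> ennreal (1 / 6) + ennreal (1 / 6)"
    using emeasure_compl_good_gauss_le[OF assms(1)] by (rule add_right_mono)
  also have "\<dots> = ennreal (1 / 3)"
    by (simp flip: ennreal_plus)
  finally have "measure (?G \<Otimes>\<^sub>M ?P) Bad \<le> 1 / 3"
    by (simp add: GP.emeasure_eq_measure)
  moreover have "{(g, Xs) \<in> space (?G \<Otimes>\<^sub>M ?P).
      (1 - \<epsilon>) * traceA d k g \<le> hutch d k l g Xs \<and> hutch d k l g Xs \<le> (1 + \<epsilon>) * traceA d k g}
      = space (?G \<Otimes>\<^sub>M ?P) - Bad"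
    unfolding Bad_def by (auto simp: algebra_simps abs_if)
  ultimately show ?thesis
    using GP.prob_compl[OF \<open>Bad \<in> sets (?G \<Otimes>\<^sub>M ?P)\<close>] by simp
qed

theorem theorem3:
  shows "\<exists>C::real. C > 0 \<and>
    (\<forall>(d::nat) (k::nat) (rad::nat \<Rightarrow> bool). d \<ge> 1 \<longrightarrow>
      measure (gauss_vec d k)
        {g \<in> space (gauss_vec d k).
           var_of (query_dist d k rad) (quad_form d k g)
             \<le> C * (2 + 1 / real d) ^ k * (traceA d k g)\<^sup>2} \<ge> 3 / 4
      \<and> (\<forall>(\<epsilon>::real) (l::nat). 0 < \<epsilon> \<and> \<epsilon> < 1 \<and> real l \<ge> C / \<epsilon>\<^sup>2 * (2 + 1 / real d) ^ k \<longrightarrow>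
           measure (gauss_vec d k \<Otimes>\<^sub>M PiM {..<l} (\<lambda>_. query_dist d k rad))
             {(g, Xs) \<in> space (gauss_vec d k \<Otimes>\<^sub>M PiM {..<l} (\<lambda>_. query_dist d k rad)).
                (1 - \<epsilon>) * traceA d k g \<le> hutch d k l g Xs \<and>
                hutch d k l g Xs \<le> (1 + \<epsilon>) * traceA d k g} \<ge> 2 / 3))"
proof (intro exI[of _ "6 * variance_const"] conjI allI impI)
  show "6 * variance_const > 0"
    using variance_const_pos by simp
  fix d k :: nat and rad :: "nat \<Rightarrow> bool"
  assume "d \<ge> 1"
  then show "measure (gauss_vec d k) {g \<in> space (gauss_vec d k).
      var_of (query_dist d k rad) (quad_form d k g) \<le> 6 * variance_const * (2 + 1 / real d) ^ k * (traceA d k g)\<^sup>2}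
    \<ge> 3 / 4"
    using variance_const_pos by (intro measure_var_of_quad_form_le) auto
  fix \<epsilon> :: real and l :: nat
  assume "0 < \<epsilon> \<and> \<epsilon> < 1 \<and> real l \<ge> 6 * variance_const / \<epsilon>\<^sup>2 * (2 + 1 / real d) ^ k"
  with \<open>d \<ge> 1\<close> show "measure (gauss_vec d k \<Otimes>\<^sub>M PiM {..<l} (\<lambda>_. query_dist d k rad))
      {(g, Xs) \<in> space (gauss_vec d k \<Otimes>\<^sub>M PiM {..<l} (\<lambda>_. query_dist d k rad)).
        (1 - \<epsilon>) * traceA d k g \<le> hutch d k l g Xs \<and> hutch d k l g Xs \<le> (1 + \<epsilon>) * traceA d k g} \<ge> 2 / 3"
    by (intro measure_hutch_accurate) auto
qed

end
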